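(* Let $p_0,p_1,p_2$ be positive integers with $\gcd(p_0,p_1,p_2)=1$, and put $n=p_0+p_1+p_2$. Let $E=(\mathbb{Z}/n\mathbb{Z})\times\{0,1,2\}$ and define permutations $\sigma_0,\sigma_1$ of $E$ by $$\sigma_0(m,0)=(m,1),\quad \sigma_0(m,1)=(m,2),\quad \sigma_0(m,2)=(m,0),$$ $$\sigma_1(m,0)=(m-p_1,2),\quad \sigma_1(m,1)=(m-p_2,0),\quad \sigma_1(m,2)=(m-p_0,1),$$ with arithmetic in the first coordinate modulo $n$. Let $G=\langle\sigma_0,\sigma_1\rangle$, $N=\langle\sigma_0\sigma_1,\sigma_1\sigma_0\rangle$ and $H=\langle\sigma_0\rangle$. Then $NH=G$.
   Context: These $\sigma_0,\sigma_1$ are the monodromy permutations of the dessin drawn on the rational billiards surface of the triangle with angles $(p_0\pi/n,p_1\pi/n,p_2\pi/n)$, acting on its $3n$ edges labeled $(m,i)$; $G$ is its monodromy group. Products are composition of functions, and $NH=\{xh: x\in N,\ h\in H\}$. *)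

theory Defs
  imports "HOL-Algebra.Algebra"
begin

text \<open>Edges E = (Z/nZ) x {0,1,2}, with Z/nZ represented by {0..<n}.\<close>
definition edges :: "nat \<Rightarrow> (nat \<times> nat) set" where
  "edges n = {0..<n} \<times> {0..<3}"

text \<open>sigma_0: (m,i) maps to (m,i+1 mod 3); extensional (undefined outside E) as required by BijGroup.\<close>
definition sigma0 :: "nat \<Rightarrow> nat \<Rightarrow> nat \<Rightarrow> (nat \<times> nat \<Rightarrow> nat \<times> nat)" where
  "sigma0 p0 p1 p2 = (\<lambda>x \<in> edges (p0 + p1 + p2). (fst x, (snd x + 1) mod 3))"

definition sigma1 :: "nat \<Rightarrow> nat \<Rightarrow> nat \<Rightarrow> (nat \<times> nat \<Rightarrow> nat \<times> nat)" where
  "sigma1 p0 p1 p2 = (let n = p0 + p1 + p2 in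
     (\<lambda>x \<in> edges n. (case x of
        (m, 0) \<Rightarrow> ((m + n - p1) mod n, 2)
      | (m, Suc 0) \<Rightarrow> ((m + n - p2) mod n, 0)
      | (m, _) \<Rightarrow> ((m + n - p0) mod n, 1))))"

end

theory Submission
  imports Defs
begin

text \<open>Both \<open>\<sigma>\<^sub>0\<close> and \<open>\<sigma>\<^sub>1\<close> have order 3 (three steps of \<open>\<sigma>\<^sub>1\<close> shift the first coordinate by
\<open>-(p\<^sub>0 + p\<^sub>1 + p\<^sub>2) = -n\<close>), and that is all that matters: in a group
generated by \<open>x\<close> and \<open>y\<close> with \<open>x\<^sup>3 = y\<^sup>3 = 1\<close>, the subgroup \<open>N = \<langle>xy, yx\<rangle>\<close> is normalised by
\<open>x\<close>, because \<open>x(xy)x\<^sup>-\<^sup>1 = (yx)\<^sup>-\<^sup>1(xy)\<^sup>-\<^sup>1\<close> and \<open>x(yx)x\<^sup>-\<^sup>1 = xy\<close>. Hence \<open>N\<langle>x\<rangle>\<close> is stable under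
left multiplication by \<open>x\<close> and by \<open>y = (yx)x\<^sup>-\<^sup>1\<close>, so it contains \<open>\<langle>x, y\<rangle>\<close>.\<close>

lemma (in group) inv_eq_square_if_cube_eq_one:
  assumes "x \<in> carrier G" "x \<otimes> x \<otimes> x = \<one>"
  shows "inv x = x \<otimes> x"
  using assms by (simp add: inv_equality)

lemma (in group) inv_mult_cancel_left [simp]:
  "x \<in> carrier G \<Longrightarrow> y \<in> carrier G \<Longrightarrow> inv x \<otimes> (x \<otimes> y) = y"
  by (simp add: m_assoc [symmetric])

lemma (in group) conj_hom: "g \<in> carrier G \<Longrightarrow> (\<lambda>a. g \<otimes> a \<otimes> inv g) \<in> hom G G"
  by (rule homI) (simp_all add: m_assoc)

lemma (in group) conj_generate_subset:
  assumes g: "g \<in> carrier G" and A: "A \<subseteq> carrier G"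
    and gens: "(\<lambda>a. g \<otimes> a \<otimes> inv g) ` A \<subseteq> generate G A"
  shows "(\<lambda>a. g \<otimes> a \<otimes> inv g) ` generate G A \<subseteq> generate G A"
proof -
  interpret conj: group_hom G G "\<lambda>a. g \<otimes> a \<otimes> inv g"
    by (simp add: group_hom_axioms_def group_hom_def conj_hom g)
  have "(\<lambda>a. g \<otimes> a \<otimes> inv g) ` generate G A = generate G ((\<lambda>a. g \<otimes> a \<otimes> inv g) ` A)"
    using conj.generate_img [OF A] by simp
  also have "\<dots> \<subseteq> generate G A"
    using gens by (simp add: A generate_is_subgroup generate_subgroup_incl)
  finally show ?thesis .
qed

lemma (in group) generate_subset_if_left_mult_closed:
  assumes A: "A \<subseteq> carrier G" and S: "S \<subseteq> carrier G" "\<one> \<in> S"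
    and closed: "\<And>a s. a \<in> A \<Longrightarrow> s \<in> S \<Longrightarrow> a \<otimes> s \<in> S"
    and inv_closed: "\<And>a s. a \<in> A \<Longrightarrow> s \<in> S \<Longrightarrow> inv a \<otimes> s \<in> S"
  shows "generate G A \<subseteq> S"
proof
  fix g assume g: "g \<in> generate G A"
  have "\<forall>s \<in> S. g \<otimes> s \<in> S"
    using g
  proof (induction rule: generate.induct)
    case one
    then show ?case using S by auto
  next
    case (incl a)
    then show ?case using closed by blast
  next
    case (inv a)
    then show ?case using inv_closed by blast
  next
    case (eng g h)
    have "g \<in> carrier G" "h \<in> carrier G"
      using eng.hyps A generate_in_carrier by auto
    then show ?case using eng.IH S by (auto simp: m_assoc)
  qed
  then show "g \<in> S"
    using S g A generate_in_carrier by force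
qed

lemma set_mult_memI: "a \<in> A \<Longrightarrow> b \<in> B \<Longrightarrow> a \<otimes>\<^bsub>G\<^esub> b \<in> A <#>\<^bsub>G\<^esub> B"
  by (auto simp: set_mult_def)

lemma set_mult_memE:
  assumes "c \<in> A <#>\<^bsub>G\<^esub> B"
  obtains a b where "a \<in> A" "b \<in> B" "c = a \<otimes>\<^bsub>G\<^esub> b"
  using assms by (auto simp: set_mult_def)

lemma (in group) set_mult_subset_subgroup:
  assumes "subgroup K G" "N \<subseteq> K" "H \<subseteq> K"
  shows "N <#> H \<subseteq> K"
proof -
  have "N <#> H \<subseteq> K <#> K"
    using assms(2,3) by (rule mono_set_mult)
  then show ?thesis
    using subgroup_mult_id [OF assms(1)] by simp
qed

lemma (in group) set_mult_left_mult_closed: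
  assumes N: "subgroup N G" and H: "subgroup H G"
    and u: "u \<in> N" and v: "v \<in> H" and normalises: "\<And>n. n \<in> N \<Longrightarrow> v \<otimes> n \<otimes> inv v \<in> N"
    and s: "s \<in> N <#> H"
  shows "u \<otimes> v \<otimes> s \<in> N <#> H"
  using s
proof (rule set_mult_memE)
  fix n h assume nh: "n \<in> N" "h \<in> H" "s = n \<otimes> h"
  have carrier: "u \<in> carrier G" "v \<in> carrier G" "n \<in> carrier G" "h \<in> carrier G"
    using u v nh subgroup.mem_carrier [OF N] subgroup.mem_carrier [OF H] by auto
  have "u \<otimes> v \<otimes> s = (u \<otimes> (v \<otimes> n \<otimes> inv v)) \<otimes> (v \<otimes> h)"
    using carrier nh(3) by (simp add: m_assoc)
  moreover have "u \<otimes> (v \<otimes> n \<otimes> inv v) \<in> N"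
    using subgroup.m_closed [OF N u normalises [OF nh(1)]] .
  moreover have "v \<otimes> h \<in> H"
    using subgroup.m_closed [OF H v nh(2)] .
  ultimately show ?thesis by (simp add: set_mult_memI)
qed

lemma (in group) generate_products_conj_closed:
  assumes x: "x \<in> carrier G" and y: "y \<in> carrier G"
    and x3: "x \<otimes> x \<otimes> x = \<one>" and y3: "y \<otimes> y \<otimes> y = \<one>"
    and n: "n \<in> generate G {x \<otimes> y, y \<otimes> x}"
  shows "x \<otimes> n \<otimes> inv x \<in> generate G {x \<otimes> y, y \<otimes> x}"
proof -
  let ?N = "generate G {x \<otimes> y, y \<otimes> x}"
  have gens: "{x \<otimes> y, y \<otimes> x} \<subseteq> carrier G" using x y by auto
  have N: "subgroup ?N G" using generate_is_subgroup [OF gens] .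
  have xy_N: "x \<otimes> y \<in> ?N" and yx_N: "y \<otimes> x \<in> ?N"
    by (auto intro: generate.incl)
  have inv_x: "inv x = x \<otimes> x" and inv_y: "inv y = y \<otimes> y"
    using x y x3 y3 inv_eq_square_if_cube_eq_one by auto
  have "inv (y \<otimes> x) \<otimes> inv (x \<otimes> y) = inv x \<otimes> (inv y \<otimes> inv y) \<otimes> inv x"
    using x y by (simp add: inv_mult_group m_assoc)
  also have "inv y \<otimes> inv y = y"
    using y y3 inv_y by (simp add: m_assoc)
  finally have "x \<otimes> (x \<otimes> y) \<otimes> inv x = inv (y \<otimes> x) \<otimes> inv (x \<otimes> y)"
    using x y inv_x by (simp add: m_assoc)
  moreover have "x \<otimes> (y \<otimes> x) \<otimes> inv x = x \<otimes> y"
    using x y by (simp add: m_assoc)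
  moreover have "inv (y \<otimes> x) \<otimes> inv (x \<otimes> y) \<in> ?N"
    using N xy_N yx_N by (blast intro: subgroup.m_closed subgroup.m_inv_closed)
  ultimately have "(\<lambda>a. x \<otimes> a \<otimes> inv x) ` {x \<otimes> y, y \<otimes> x} \<subseteq> ?N"
    using xy_N by simp
  then show ?thesis
    using conj_generate_subset [OF x gens] n by blast
qed

lemma (in group) generate_products_conj_inv_closed:
  assumes x: "x \<in> carrier G" and y: "y \<in> carrier G"
    and x3: "x \<otimes> x \<otimes> x = \<one>" and y3: "y \<otimes> y \<otimes> y = \<one>"
    and n: "n \<in> generate G {x \<otimes> y, y \<otimes> x}"
  shows "inv x \<otimes> n \<otimes> inv (inv x) \<in> generate G {x \<otimes> y, y \<otimes> x}"
proof -
  have "{x \<otimes> y, y \<otimes> x} \<subseteq> carrier G"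
    using x y by auto
  then have "n \<in> carrier G"
    using n by (rule generate_in_carrier)
  have inv_x: "inv x = x \<otimes> x"
    using x x3 inv_eq_square_if_cube_eq_one by auto
  have "inv (x \<otimes> x) = x"
    using x by (subst inv_x [symmetric]) simp
  then have "inv x \<otimes> n \<otimes> inv (inv x) = (x \<otimes> x) \<otimes> n \<otimes> inv (x \<otimes> x)"
    using x by (simp only: inv_x)
  also have "\<dots> = x \<otimes> (x \<otimes> n \<otimes> inv x) \<otimes> inv x"
    using x \<open>n \<in> carrier G\<close> by (simp add: m_assoc inv_mult_group)
  finally show ?thesis
    using generate_products_conj_closed [OF x y x3 y3] n by simp
qed

lemma (in group) generate_products_set_mult_left_mult_closed:
  assumes x: "x \<in> carrier G" and y: "y \<in> carrier G"
    and x3: "x \<otimes> x \<otimes> x = \<one>" and y3: "y \<otimes> y \<otimes> y = \<one>"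
    and a: "a \<in> {x, y}" and s: "s \<in> generate G {x \<otimes> y, y \<otimes> x} <#> generate G {x}"
  shows "a \<otimes> s \<in> generate G {x \<otimes> y, y \<otimes> x} <#> generate G {x}"
proof -
  define N where "N = generate G {x \<otimes> y, y \<otimes> x}"
  define H where "H = generate G {x}"
  have N: "subgroup N G" and H: "subgroup H G"
    unfolding N_def H_def using x y generate_is_subgroup by auto
  have x_H: "x \<in> H" and inv_x_H: "inv x \<in> H" and yx_N: "y \<otimes> x \<in> N"
    unfolding N_def H_def by (auto intro: generate.incl generate.inv)
  have "x \<otimes> s = \<one> \<otimes> x \<otimes> s" "y \<otimes> s = (y \<otimes> x) \<otimes> inv x \<otimes> s"
    using x y by (simp_all add: m_assoc)
  moreover have "\<one> \<otimes> x \<otimes> s \<in> N <#> H"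
    using set_mult_left_mult_closed [OF N H subgroup.one_closed [OF N] x_H] s
      generate_products_conj_closed [OF x y x3 y3] unfolding N_def H_def by blast
  moreover have "(y \<otimes> x) \<otimes> inv x \<otimes> s \<in> N <#> H"
    using set_mult_left_mult_closed [OF N H yx_N inv_x_H] s
      generate_products_conj_inv_closed [OF x y x3 y3] unfolding N_def H_def by blast
  ultimately show ?thesis
    using a unfolding N_def H_def by auto
qed

lemma (in group) generate_products_set_mult_subset:
  assumes x: "x \<in> carrier G" and y: "y \<in> carrier G"
  shows "generate G {x \<otimes> y, y \<otimes> x} <#> generate G {x} \<subseteq> generate G {x, y}"
proof (rule set_mult_subset_subgroup)
  let ?K = "generate G {x, y}"
  show K: "subgroup ?K G"
    using x y generate_is_subgroup by auto
  have "x \<in> ?K" "y \<in> ?K"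
    by (auto intro: generate.incl)
  then have "{x \<otimes> y, y \<otimes> x} \<subseteq> ?K"
    using subgroup.m_closed [OF K] by blast
  then show "generate G {x \<otimes> y, y \<otimes> x} \<subseteq> ?K"
    using K by (rule generate_subgroup_incl)
  show "generate G {x} \<subseteq> ?K"
    by (rule mono_generate) auto
qed

lemma (in group) set_mult_generate_products_generate:
  assumes x: "x \<in> carrier G" and y: "y \<in> carrier G"
    and x3: "x \<otimes> x \<otimes> x = \<one>" and y3: "y \<otimes> y \<otimes> y = \<one>"
  shows "generate G {x \<otimes> y, y \<otimes> x} <#> generate G {x} = generate G {x, y}"
    (is "?NH = _")
proof
  have "{x \<otimes> y, y \<otimes> x} \<subseteq> carrier G" "{x} \<subseteq> carrier G"
    using x y by auto
  then have NH_carrier: "?NH \<subseteq> carrier G"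
    by (intro set_mult_closed generate_incl)
  show "generate G {x, y} \<subseteq> ?NH"
  proof (rule generate_subset_if_left_mult_closed)
    have "\<one> \<otimes> \<one> \<in> ?NH"
      by (intro set_mult_memI generate.one)
    then show "\<one> \<in> ?NH" by simp
    fix a s assume a: "a \<in> {x, y}" and s: "s \<in> ?NH"
    show "a \<otimes> s \<in> ?NH"
      using generate_products_set_mult_left_mult_closed [OF x y x3 y3 a s] .
    have "a \<in> carrier G" "s \<in> carrier G" "inv a = a \<otimes> a"
      using a s x y x3 y3 NH_carrier inv_eq_square_if_cube_eq_one by auto
    then have "inv a \<otimes> s = a \<otimes> (a \<otimes> s)"
      by (simp add: m_assoc)
    then show "inv a \<otimes> s \<in> ?NH"
      using generate_products_set_mult_left_mult_closed [OF x y x3 y3 a] s by simp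
  qed (use x y NH_carrier in auto)
  show "?NH \<subseteq> generate G {x, y}"
    using generate_products_set_mult_subset [OF x y] .
qed

lemma BijGroup_order3:
  assumes "f \<in> extensional E" and maps: "\<And>x. x \<in> E \<Longrightarrow> f x \<in> E"
    and cube: "\<And>x. x \<in> E \<Longrightarrow> f (f (f x)) = x"
  shows "f \<in> carrier (BijGroup E)"
    and "f \<otimes>\<^bsub>BijGroup E\<^esub> f \<otimes>\<^bsub>BijGroup E\<^esub> f = \<one>\<^bsub>BijGroup E\<^esub>"
proof -
  have "bij_betw f E E"
    by (rule bij_betw_byWitness [where f' = "\<lambda>x. f (f x)"]) (use maps cube in auto)
  then have f: "f \<in> Bij E"
    using assms(1) by (simp add: Bij_def)
  then show "f \<in> carrier (BijGroup E)"
    by (simp add: BijGroup_def)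
  show "f \<otimes>\<^bsub>BijGroup E\<^esub> f \<otimes>\<^bsub>BijGroup E\<^esub> f = \<one>\<^bsub>BijGroup E\<^esub>"
    using f compose_Bij [OF f f] maps cube by (auto simp: BijGroup_def compose_def fun_eq_iff)
qed

lemma int_add_diff_mod:
  fixes m n a :: nat
  assumes "a \<le> n"
  shows "int ((m + n - a) mod n) = (int m - int a) mod int n"
proof -
  have "int ((m + n - a) mod n) = (int m + int n - int a) mod int n"
    using assms by (simp add: of_nat_mod)
  also have "int m + int n - int a = (int m - int a) + int n"
    by simp
  finally show ?thesis
    by (simp only: mod_add_self2)
qed

lemma add_diff_mod_thrice:
  fixes m n a b c :: nat
  assumes "m < n" "a + b + c = n"
  shows "(((m + n - a) mod n + n - b) mod n + n - c) mod n = m"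
proof -
  have "int ((((m + n - a) mod n + n - b) mod n + n - c) mod n)
      = (int m - int a - int b - int c) mod int n"
    using assms by (simp add: int_add_diff_mod mod_diff_left_eq)
  also have "\<dots> = (int m - int n) mod int n"
    using assms by (simp add: algebra_simps flip: of_nat_add)
  also have "\<dots> = int m"
    using assms by simp
  finally show ?thesis by simp
qed

lemma edges_cases:
  assumes "e \<in> edges n"
  obtains (zero) m where "m < n" "e = (m, 0)"
    | (one) m where "m < n" "e = (m, 1)"
    | (two) m where "m < n" "e = (m, 2)"
proof -
  obtain m i where "e = (m, i)" "m < n" "i < 3"
    using assms by (cases e) (auto simp: edges_def)
  moreover have "i = 0 \<or> i = 1 \<or> i = 2"
    using \<open>i < 3\<close> by linarith
  ultimately show ?thesis
    using that by blast
qed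

lemma sigma0_order3:
  fixes p0 p1 p2 :: nat
  defines "S \<equiv> BijGroup (edges (p0 + p1 + p2))"
  shows "sigma0 p0 p1 p2 \<in> carrier S"
    and "sigma0 p0 p1 p2 \<otimes>\<^bsub>S\<^esub> sigma0 p0 p1 p2 \<otimes>\<^bsub>S\<^esub> sigma0 p0 p1 p2 = \<one>\<^bsub>S\<^esub>"
proof -
  define n where "n = p0 + p1 + p2"
  have "sigma0 p0 p1 p2 \<in> extensional (edges n)"
    by (simp add: sigma0_def n_def)
  moreover have "sigma0 p0 p1 p2 e \<in> edges n" if "e \<in> edges n" for e
    using that by (cases rule: edges_cases) (simp_all add: sigma0_def n_def edges_def)
  moreover have "sigma0 p0 p1 p2 (sigma0 p0 p1 p2 (sigma0 p0 p1 p2 e)) = e" if "e \<in> edges n" for e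
    using that by (cases rule: edges_cases) (simp_all add: sigma0_def n_def edges_def)
  ultimately show "sigma0 p0 p1 p2 \<in> carrier S"
    and "sigma0 p0 p1 p2 \<otimes>\<^bsub>S\<^esub> sigma0 p0 p1 p2 \<otimes>\<^bsub>S\<^esub> sigma0 p0 p1 p2 = \<one>\<^bsub>S\<^esub>"
    using BijGroup_order3 unfolding S_def n_def by blast+
qed

text \<open>The middle case is written \<open>Suc 0\<close>, the simplifier's normal form of \<open>1 :: nat\<close>,
  so that these equations fire after simplification.\<close>

lemma sigma1_simps:
  assumes "n = p0 + p1 + p2" "m < n"
  shows "sigma1 p0 p1 p2 (m, 0) = ((m + n - p1) mod n, 2)"
    and "sigma1 p0 p1 p2 (m, Suc 0) = ((m + n - p2) mod n, 0)"
    and "sigma1 p0 p1 p2 (m, 2) = ((m + n - p0) mod n, 1)"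
  using assms by (simp_all add: sigma1_def edges_def Let_def numeral_eq_Suc)

lemma sigma1_order3:
  fixes p0 p1 p2 :: nat
  defines "S \<equiv> BijGroup (edges (p0 + p1 + p2))"
  shows "sigma1 p0 p1 p2 \<in> carrier S"
    and "sigma1 p0 p1 p2 \<otimes>\<^bsub>S\<^esub> sigma1 p0 p1 p2 \<otimes>\<^bsub>S\<^esub> sigma1 p0 p1 p2 = \<one>\<^bsub>S\<^esub>"
proof -
  define n where "n = p0 + p1 + p2"
  have sums: "p1 + p0 + p2 = n" "p2 + p1 + p0 = n" "p0 + p2 + p1 = n"
    by (simp_all add: n_def)
  have maps: "sigma1 p0 p1 p2 e \<in> edges n" if "e \<in> edges n" for e
    using that by (cases rule: edges_cases) (simp_all add: sigma1_simps [OF n_def] edges_def)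
  have cube: "sigma1 p0 p1 p2 (sigma1 p0 p1 p2 (sigma1 p0 p1 p2 e)) = e" if "e \<in> edges n" for e
    using that
  proof (cases rule: edges_cases)
    case (zero m)
    then show ?thesis
      using add_diff_mod_thrice [OF zero(1) sums(1)]
      by (simp add: sigma1_simps [OF n_def])
  next
    case (one m)
    then show ?thesis
      using add_diff_mod_thrice [OF one(1) sums(2)]
      by (simp add: sigma1_simps [OF n_def])
  next
    case (two m)
    then show ?thesis
      using add_diff_mod_thrice [OF two(1) sums(3)]
      by (simp add: sigma1_simps [OF n_def])
  qed
  have "sigma1 p0 p1 p2 \<in> extensional (edges n)"
    by (simp add: sigma1_def n_def Let_def)
  from BijGroup_order3 [OF this maps cube]
  show "sigma1 p0 p1 p2 \<in> carrier S"
    and "sigma1 p0 p1 p2 \<otimes>\<^bsub>S\<^esub> sigma1 p0 p1 p2 \<otimes>\<^bsub>S\<^esub> sigma1 p0 p1 p2 = \<one>\<^bsub>S\<^esub>"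
    unfolding S_def n_def by blast+
qed

theorem lemma6:
  fixes p0 p1 p2 :: nat
  assumes "p0 > 0" "p1 > 0" "p2 > 0"
    and "gcd p0 (gcd p1 p2) = 1"
  defines "n \<equiv> p0 + p1 + p2"
  defines "S \<equiv> BijGroup (edges n)"
  defines "s0 \<equiv> sigma0 p0 p1 p2" and "s1 \<equiv> sigma1 p0 p1 p2"
  defines "G \<equiv> generate S {s0, s1}"
    and "N \<equiv> generate S {s0 \<otimes>\<^bsub>S\<^esub> s1, s1 \<otimes>\<^bsub>S\<^esub> s0}"
    and "H \<equiv> generate S {s0}"
  shows "N <#>\<^bsub>S\<^esub> H = G"
proof -
  have "group S"
    unfolding S_def by (rule group_BijGroup)
  note s0 = sigma0_order3 [of p0 p1 p2, folded n_def S_def s0_def]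
  note s1 = sigma1_order3 [of p0 p1 p2, folded n_def S_def s1_def]
  show ?thesis
    unfolding N_def H_def G_def
    by (rule group.set_mult_generate_products_generate [OF \<open>group S\<close> s0(1) s1(1) s0(2) s1(2)])
qed

end
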